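(* Let $k$ be a field, $R=k[x,y]$, $I=(x^d,y^d,x^by^{d-b})$ with $d\ge2$, $1\le b\le d-b$, $\gcd(d,b)=1$, $J=(x^d,y^d)$, and for $\ell\ge1$ write $JI^{\ell-1}:I^\ell=(x^{s_\ell},y^{t_\ell})$ with nonnegative integers $s_\ell,t_\ell$. Then: (i) there is a least index $\ell_0\ge1$ such that $s_{\ell_0}=1$ or $t_{\ell_0}=1$; (ii) there is a least index $\ell_0'\ge1$ such that $s_{\ell_0'}=t_{\ell_0'}=1$, i.e. $JI^{\ell_0'-1}:I^{\ell_0'}=(x,y)$; (iii) $\ell_0'\ge d-\ell_0$. *)

theory Defs
  imports "HOL-Computational_Algebra.Polynomial"
begin

text \<open>The bivariate polynomial ring k[x,y] is represented as ('a poly) poly: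
  polynomials in y whose coefficients are polynomials in x.\<close>

definition var_x :: "'a::field poly poly" where
  "var_x = monom (monom 1 1) 0"

definition var_y :: "'a::field poly poly" where
  "var_y = monom 1 1"

definition gen_ideal :: "'r::comm_ring_1 set \<Rightarrow> 'r set" where
  "gen_ideal S = {f. \<exists>F c. finite F \<and> F \<subseteq> S \<and> f = (\<Sum>g\<in>F. c g * g)}"

definition ideal_prod :: "'r::comm_ring_1 set \<Rightarrow> 'r set \<Rightarrow> 'r set" where
  "ideal_prod A B = gen_ideal {a * b | a b. a \<in> A \<and> b \<in> B}"

fun ideal_pow :: "'r::comm_ring_1 set \<Rightarrow> nat \<Rightarrow> 'r set" where
  "ideal_pow A 0 = UNIV"
| "ideal_pow A (Suc n) = ideal_prod A (ideal_pow A n)"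

definition ideal_colon :: "'r::comm_ring_1 set \<Rightarrow> 'r set \<Rightarrow> 'r set" where
  "ideal_colon A B = {f. \<forall>g\<in>B. f * g \<in> A}"

definition I_id :: "nat \<Rightarrow> nat \<Rightarrow> 'a::field poly poly set" where
  "I_id d b = gen_ideal {var_x ^ d, var_y ^ d, var_x ^ b * var_y ^ (d - b)}"

definition J_id :: "nat \<Rightarrow> 'a::field poly poly set" where
  "J_id d = gen_ideal {var_x ^ d, var_y ^ d}"

definition colonI :: "nat \<Rightarrow> nat \<Rightarrow> nat \<Rightarrow> 'a::field poly poly set" where
  "colonI d b l = ideal_colon (ideal_prod (J_id d) (ideal_pow (I_id d b) (l - 1)))
                              (ideal_pow (I_id d b) l)"

definition s_exp :: "'a::field itself \<Rightarrow> nat \<Rightarrow> nat \<Rightarrow> nat \<Rightarrow> nat" where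
  "s_exp _ d b l = (LEAST s. (var_x ^ s :: 'a poly poly) \<in> colonI d b l)"

definition t_exp :: "'a::field itself \<Rightarrow> nat \<Rightarrow> nat \<Rightarrow> nat \<Rightarrow> nat" where
  "t_exp _ d b l = (LEAST t. (var_y ^ t :: 'a poly poly) \<in> colonI d b l)"

end

theory Submission
  imports Defs "HOL-Number_Theory.Cong"
begin

text \<open>
  All ideals involved are monomial ideals of \<open>k[x,y]\<close>, so the theorem is a statement about
  exponent sets in \<open>\<nat>\<^sup>2\<close>.  The generators of \<open>I^l\<close> have exponents
  \<open>(d i + b k, d j + (d - b) k)\<close> with \<open>i + j + k = l\<close>, those of \<open>J I^(l-1)\<close> the same with
  \<open>k < l\<close>; all of the latter lie on the antidiagonal \<open>a + c = d l\<close>.  The only generator of \<open>I^l\<close>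
  that matters for the colon is the corner \<open>(b l, (d - b) l)\<close>, so \<open>x^a y^c\<close> lies in
  \<open>J I^(l-1) : I^l\<close> iff some generator of \<open>J I^(l-1)\<close> has \<open>x\<close>-exponent in \<open>[b l, b l + a]\<close> or
  in \<open>[b l - c, b l]\<close>.  Hence the colon is \<open>(x^(s_l), y^(t_l))\<close>, where \<open>s_l\<close>, \<open>t_l\<close> are the
  gaps from \<open>b l\<close> to the nearest such exponents (both \<open>0\<close> for \<open>l \<ge> d\<close>, when the corner itself
  is in \<open>J I^(l-1)\<close>; both positive for \<open>l < d\<close> by coprimality).  With \<open>u = b\<^sup>-\<^sup>1 mod d\<close>,
  solving \<open>b m \<equiv> \<plusminus>1 (mod d)\<close> shows \<open>s_l = 1 \<longleftrightarrow> d - u \<le> l < d\<close> and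
  \<open>t_l = 1 \<longleftrightarrow> u \<le> l < d\<close>.  So \<open>\<ell>\<^sub>0 = min u (d - u)\<close> and \<open>\<ell>\<^sub>0' = max u (d - u) = d - \<ell>\<^sub>0\<close>.
\<close>

definition is_ideal :: "'r::comm_ring_1 set \<Rightarrow> bool" where
  "is_ideal K \<longleftrightarrow> 0 \<in> K \<and> (\<forall>x\<in>K. \<forall>y\<in>K. x + y \<in> K) \<and> (\<forall>r. \<forall>x\<in>K. r * x \<in> K)"

lemma gen_ideal_base: "s \<in> S \<Longrightarrow> s \<in> gen_ideal S"
  unfolding gen_ideal_def by (intro CollectI exI[of _ "{s}"] exI[of _ "\<lambda>_. 1"]) auto

lemma gen_ideal_least:
  assumes "is_ideal K" "S \<subseteq> K" shows "gen_ideal S \<subseteq> K"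
proof
  fix f assume "f \<in> gen_ideal S"
  then obtain F c where F: "finite F" "F \<subseteq> S" "f = (\<Sum>g\<in>F. c g * g)"
    unfolding gen_ideal_def by blast
  have "F \<subseteq> S \<Longrightarrow> (\<Sum>g\<in>F. c g * g) \<in> K" using F(1)
    by (induction F rule: finite_induct) (use assms in \<open>auto simp: is_ideal_def\<close>)
  then show "f \<in> K" using F by simp
qed

lemma sum_zero_extend:
  fixes c :: "'r \<Rightarrow> 'r::comm_ring_1"
  assumes "finite G" "F \<subseteq> G"
  shows "(\<Sum>g\<in>F. c g * g) = (\<Sum>g\<in>G. (if g \<in> F then c g else 0) * g)"
  by (rule sum.mono_neutral_cong_left) (use assms in auto)

lemma is_ideal_gen_ideal: "is_ideal (gen_ideal S)"
  unfolding is_ideal_def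
proof (intro conjI ballI allI)
  show "0 \<in> gen_ideal S" unfolding gen_ideal_def by (intro CollectI exI[of _ "{}"]) auto
next
  fix x y assume "x \<in> gen_ideal S" "y \<in> gen_ideal S"
  then obtain F c G e where F: "finite F" "F \<subseteq> S" "x = (\<Sum>g\<in>F. c g * g)"
    and G: "finite G" "G \<subseteq> S" "y = (\<Sum>g\<in>G. e g * g)"
    unfolding gen_ideal_def by blast
  let ?h = "\<lambda>g. (if g \<in> F then c g else 0) + (if g \<in> G then e g else 0)"
  have "x + y = (\<Sum>g\<in>F \<union> G. ?h g * g)"
    using F G sum_zero_extend[of "F \<union> G" F c] sum_zero_extend[of "F \<union> G" G e]
    by (simp add: distrib_right sum.distrib)
  then show "x + y \<in> gen_ideal S" unfolding gen_ideal_def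
    by (intro CollectI exI[of _ "F \<union> G"] exI[of _ ?h]) (use F G in auto)
next
  fix r x assume "x \<in> gen_ideal S"
  then obtain F c where F: "finite F" "F \<subseteq> S" "x = (\<Sum>g\<in>F. c g * g)"
    unfolding gen_ideal_def by blast
  have "r * x = (\<Sum>g\<in>F. (r * c g) * g)"
    using F by (simp add: sum_distrib_left mult.assoc)
  then show "r * x \<in> gen_ideal S" unfolding gen_ideal_def
    by (intro CollectI exI[of _ F] exI[of _ "\<lambda>g. r * c g"]) (use F in auto)
qed

lemma gen_ideal_add: "x \<in> gen_ideal S \<Longrightarrow> y \<in> gen_ideal S \<Longrightarrow> x + y \<in> gen_ideal S"
  and gen_ideal_mult: "x \<in> gen_ideal S \<Longrightarrow> r * x \<in> gen_ideal S"
  and gen_ideal_0: "0 \<in> gen_ideal S"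
  using is_ideal_gen_ideal[of S] unfolding is_ideal_def by blast+

lemma gen_ideal_sum: "(\<And>i. i \<in> F \<Longrightarrow> f i \<in> gen_ideal S) \<Longrightarrow> (\<Sum>i\<in>F. f i) \<in> gen_ideal S"
  by (induction F rule: infinite_finite_induct) (auto intro: gen_ideal_add gen_ideal_0)

lemma gen_ideal_unit: "(x::'r::comm_ring_1) \<in> gen_ideal {1}"
  using gen_ideal_mult[OF gen_ideal_base[of 1 "{1}"], of x] by simp

lemma is_ideal_mult_preimage:
  assumes "is_ideal K" shows "is_ideal {y. s * y \<in> K}"
  using assms unfolding is_ideal_def by (auto simp: distrib_left mult.left_commute)

lemma ideal_prod_gen_ideal:
  "ideal_prod (gen_ideal S) (gen_ideal T) = gen_ideal {s * t | s t. s \<in> S \<and> t \<in> T}"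
    (is "_ = gen_ideal ?G")
proof
  show "gen_ideal ?G \<subseteq> ideal_prod (gen_ideal S) (gen_ideal T)"
    unfolding ideal_prod_def
    by (rule gen_ideal_least[OF is_ideal_gen_ideal]) (auto intro: gen_ideal_base)
next
  have gen_times: "s * y \<in> gen_ideal ?G" if "s \<in> S" "y \<in> gen_ideal T" for s y
    using gen_ideal_least[OF is_ideal_mult_preimage[OF is_ideal_gen_ideal[of ?G]], of T s] that
    by (auto intro: gen_ideal_base)
  have "x * y \<in> gen_ideal ?G" if "x \<in> gen_ideal S" "y \<in> gen_ideal T" for x y
    using gen_ideal_least[OF is_ideal_mult_preimage[OF is_ideal_gen_ideal[of ?G]], of S y] that gen_times
    by (auto simp: mult.commute)
  then show "ideal_prod (gen_ideal S) (gen_ideal T) \<subseteq> gen_ideal ?G"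
    unfolding ideal_prod_def by (intro gen_ideal_least[OF is_ideal_gen_ideal]) auto
qed

lemma ideal_colon_gen_ideal:
  assumes "is_ideal A"
  shows "f \<in> ideal_colon A (gen_ideal T) \<longleftrightarrow> (\<forall>t\<in>T. f * t \<in> A)"
  using gen_ideal_least[OF is_ideal_mult_preimage[OF assms], of T f]
  unfolding ideal_colon_def by (auto intro: gen_ideal_base)

definition mon :: "nat \<Rightarrow> nat \<Rightarrow> 'a::field poly poly" where
  "mon a c = monom (monom 1 a) c"

definition cf :: "'a::field poly poly \<Rightarrow> nat \<Rightarrow> nat \<Rightarrow> 'a" where
  "cf f a c = coeff (coeff f c) a"

definition monp :: "nat \<times> nat \<Rightarrow> 'a::field poly poly" where
  "monp g = mon (fst g) (snd g)"

definition mideal :: "(nat \<times> nat) set \<Rightarrow> 'a::field poly poly set" where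
  "mideal G = {f. \<forall>a c. cf f a c \<noteq> 0 \<longrightarrow> (\<exists>g\<in>G. fst g \<le> a \<and> snd g \<le> c)}"

lemma mon_mult: "mon a c * mon a' c' = (mon (a + a') (c + c') :: 'a::field poly poly)"
  by (simp add: mon_def mult_monom)

lemma mon_0: "mon 0 0 = (1 :: 'a::field poly poly)"
  by (simp add: mon_def monom_0 one_pCons)

lemma var_x_pow: "var_x ^ a = (mon a 0 :: 'a::field poly poly)"
  by (simp add: var_x_def mon_def monom_power)

lemma var_y_pow: "var_y ^ c = (mon 0 c :: 'a::field poly poly)"
  by (simp add: var_y_def mon_def monom_power monom_0 flip: one_pCons)

lemma cf_mult_mon: "cf (h * mon a c) a' c' =
   (if a \<le> a' \<and> c \<le> c' then cf h (a' - a) (c' - c) else 0)"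
  by (simp add: cf_def mon_def mult.commute[of h] coeff_monom_mult mult.commute[of _ "monom 1 a"])

lemma cf_mon: "cf (mon a c :: 'a::field poly poly) a' c' = (if a' = a \<and> c' = c then 1 else 0)"
  by (simp add: cf_def mon_def)

lemma cf_sum: "cf (\<Sum>x\<in>A. p x) a c = (\<Sum>x\<in>A. cf (p x) a c)"
  by (simp add: cf_def coeff_sum)

lemma gen_ideal_monp_subset: "gen_ideal (monp ` G) \<subseteq> (mideal G :: 'a::field poly poly set)"
proof
  fix f :: "'a poly poly" assume "f \<in> gen_ideal (monp ` G)"
  then obtain F k where F: "finite F" "F \<subseteq> monp ` G" "f = (\<Sum>g\<in>F. k g * g)"
    unfolding gen_ideal_def by blast
  show "f \<in> mideal G" unfolding mideal_def
  proof (intro CollectI allI impI)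
    fix a c assume "cf f a c \<noteq> 0"
    then have "(\<Sum>g\<in>F. cf (k g * g) a c) \<noteq> 0" using F by (simp add: cf_sum)
    then obtain g where g: "g \<in> F" "cf (k g * g) a c \<noteq> 0" by (meson sum.neutral)
    then obtain g1 g2 where "(g1, g2) \<in> G" "g = mon g1 g2" using F by (auto simp: monp_def)
    moreover have "g1 \<le> a \<and> g2 \<le> c" using g(2) \<open>g = mon g1 g2\<close>
      by (auto simp: cf_mult_mon split: if_splits)
    ultimately show "\<exists>g\<in>G. fst g \<le> a \<and> snd g \<le> c" by force
  qed
qed

text \<open>Conversely, a polynomial is the sum of its terms, each a multiple of a generator.\<close>
lemma mideal_subset_gen_ideal_monp: "(mideal G :: 'a::field poly poly set) \<subseteq> gen_ideal (monp ` G)"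
proof
  fix f :: "'a poly poly" assume f: "f \<in> mideal G"
  have term_in: "monom (monom (cf f a c) a) c \<in> gen_ideal (monp ` G)" for a c
  proof (cases "cf f a c = 0")
    case False
    then obtain g where g: "g \<in> G" "fst g \<le> a" "snd g \<le> c" using f unfolding mideal_def by blast
    then have "monom (monom (cf f a c) a) c
             = monom (monom (cf f a c) (a - fst g)) (c - snd g) * monp g"
      by (simp add: monp_def mon_def mult_monom)
    then show ?thesis using g by (simp add: gen_ideal_mult gen_ideal_base)
  qed (simp add: gen_ideal_0)
  have "f = (\<Sum>c\<le>degree f. monom (coeff f c) c)"
    by (simp add: poly_as_sum_of_monoms)
  also have "\<dots> = (\<Sum>c\<le>degree f. monom (\<Sum>a\<le>degree (coeff f c). monom (cf f a c) a) c)"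
    by (simp add: cf_def poly_as_sum_of_monoms)
  also have "\<dots> = (\<Sum>c\<le>degree f. \<Sum>a\<le>degree (coeff f c). monom (monom (cf f a c) a) c)"
    by (simp add: monom_sum)
  also have "\<dots> \<in> gen_ideal (monp ` G)"
    by (intro gen_ideal_sum term_in)
  finally show "f \<in> gen_ideal (monp ` G)" .
qed

lemma gen_ideal_monp: "gen_ideal (monp ` G) = (mideal G :: 'a::field poly poly set)"
  using gen_ideal_monp_subset mideal_subset_gen_ideal_monp by blast

lemma gen_ideal_two_monomials:
  "(f :: 'a::field poly poly) \<in> gen_ideal {var_x ^ s, var_y ^ t} \<longleftrightarrow>
    (\<forall>a c. cf f a c \<noteq> 0 \<longrightarrow> s \<le> a \<or> t \<le> c)"
proof -
  have "{var_x ^ s, var_y ^ t} = (monp ` {(s,0),(0,t)} :: 'a poly poly set)"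
    by (simp add: monp_def var_x_pow var_y_pow)
  then have "gen_ideal {var_x ^ s, var_y ^ t} = (mideal {(s,0),(0,t)} :: 'a poly poly set)"
    by (simp only: gen_ideal_monp)
  then show ?thesis by (simp add: mideal_def)
qed

definition msum :: "(nat \<times> nat) set \<Rightarrow> (nat \<times> nat) set \<Rightarrow> (nat \<times> nat) set" where
  "msum A B = {(fst x + fst y, snd x + snd y) | x y. x \<in> A \<and> y \<in> B}"

lemma mem_msum: "x \<in> A \<Longrightarrow> y \<in> B \<Longrightarrow> (fst x + fst y, snd x + snd y) \<in> msum A B"
  unfolding msum_def by blast

lemma monp_mult: "monp x * monp y = (monp (fst x + fst y, snd x + snd y) :: 'a::field poly poly)"
  by (simp add: monp_def mon_mult)

lemma ideal_prod_monp: "ideal_prod (gen_ideal (monp ` A)) (gen_ideal (monp ` B)) =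
   (gen_ideal (monp ` msum A B) :: 'a::field poly poly set)"
proof -
  have "{s * t | s t. s \<in> (monp ` A :: 'a poly poly set) \<and> t \<in> monp ` B} = monp ` msum A B"
  proof (intro equalityI subsetI)
    fix z :: "'a poly poly"
    assume "z \<in> {s * t | s t. s \<in> monp ` A \<and> t \<in> monp ` B}"
    then obtain x y where "x \<in> A" "y \<in> B" "z = monp x * monp y" by blast
    then show "z \<in> monp ` msum A B" using mem_msum[of x A y B] by (simp add: monp_mult)
  next
    fix z :: "'a poly poly" assume "z \<in> monp ` msum A B"
    then obtain x y where "x \<in> A" "y \<in> B" "z = monp x * monp y"
      unfolding msum_def by (auto simp: monp_mult)
    then show "z \<in> {s * t | s t. s \<in> monp ` A \<and> t \<in> monp ` B}" by blast
  qed
  then show ?thesis by (simp add: ideal_prod_gen_ideal)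
qed

definition colon_cond :: "(nat \<times> nat) set \<Rightarrow> (nat \<times> nat) set \<Rightarrow> nat \<Rightarrow> nat \<Rightarrow> bool" where
  "colon_cond A B a c \<longleftrightarrow> (\<forall>\<beta>\<in>B. \<exists>\<alpha>\<in>A. fst \<alpha> \<le> a + fst \<beta> \<and> snd \<alpha> \<le> c + snd \<beta>)"

lemma ideal_colon_monp:
  "(f :: 'a::field poly poly) \<in> ideal_colon (gen_ideal (monp ` A)) (gen_ideal (monp ` B)) \<longleftrightarrow>
   (\<forall>a c. cf f a c \<noteq> 0 \<longrightarrow> colon_cond A B a c)"
proof -
  have "f \<in> ideal_colon (gen_ideal (monp ` A)) (gen_ideal (monp ` B)) \<longleftrightarrow>
        (\<forall>\<beta>\<in>B. f * monp \<beta> \<in> mideal A)"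
    using ideal_colon_gen_ideal[OF is_ideal_gen_ideal[of "monp ` A"], of f "monp ` B"]
    by (simp add: gen_ideal_monp)
  also have "\<dots> \<longleftrightarrow> (\<forall>a c. cf f a c \<noteq> 0 \<longrightarrow> colon_cond A B a c)"
  proof
    assume h: "\<forall>\<beta>\<in>B. f * monp \<beta> \<in> mideal A"
    show "\<forall>a c. cf f a c \<noteq> 0 \<longrightarrow> colon_cond A B a c" unfolding colon_cond_def
    proof (intro allI impI ballI)
      fix a c \<beta> assume "cf f a c \<noteq> 0" "\<beta> \<in> B"
      then have "cf (f * monp \<beta>) (a + fst \<beta>) (c + snd \<beta>) \<noteq> 0"
        by (simp add: monp_def cf_mult_mon)
      then show "\<exists>\<alpha>\<in>A. fst \<alpha> \<le> a + fst \<beta> \<and> snd \<alpha> \<le> c + snd \<beta>"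
        using h \<open>\<beta> \<in> B\<close> unfolding mideal_def by blast
    qed
  next
    assume h: "\<forall>a c. cf f a c \<noteq> 0 \<longrightarrow> colon_cond A B a c"
    show "\<forall>\<beta>\<in>B. f * monp \<beta> \<in> mideal A" unfolding mideal_def
    proof (intro ballI CollectI allI impI)
      fix \<beta> a' c' assume \<beta>: "\<beta> \<in> B" and nz: "cf (f * monp \<beta>) a' c' \<noteq> 0"
      then have le: "fst \<beta> \<le> a'" "snd \<beta> \<le> c'" and "cf f (a' - fst \<beta>) (c' - snd \<beta>) \<noteq> 0"
        by (auto simp: monp_def cf_mult_mon split: if_splits)
      then have "colon_cond A B (a' - fst \<beta>) (c' - snd \<beta>)" using h by blast
      then obtain \<alpha> where "\<alpha> \<in> A" "fst \<alpha> \<le> a' - fst \<beta> + fst \<beta>" "snd \<alpha> \<le> c' - snd \<beta> + snd \<beta>"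
        using \<beta> unfolding colon_cond_def by blast
      then show "\<exists>\<alpha>\<in>A. fst \<alpha> \<le> a' \<and> snd \<alpha> \<le> c'" using le by auto
    qed
  qed
  finally show ?thesis .
qed

text \<open>Exponents of the generators of \<open>I\<close>, of \<open>J\<close>, of \<open>I^n\<close> (products of \<open>i\<close> copies of \<open>x^d\<close>,
  \<open>j\<close> of \<open>y^d\<close> and \<open>k\<close> of \<open>x^b y^(d-b)\<close>) and of \<open>J I^(l-1)\<close> (the same with \<open>k < l\<close>).\<close>
definition exps_I :: "nat \<Rightarrow> nat \<Rightarrow> (nat \<times> nat) set" where
  "exps_I d b = {(d,0), (0,d), (b,d-b)}"

definition exps_J :: "nat \<Rightarrow> (nat \<times> nat) set" where
  "exps_J d = {(d,0), (0,d)}"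

definition exps_Ipow :: "nat \<Rightarrow> nat \<Rightarrow> nat \<Rightarrow> (nat \<times> nat) set" where
  "exps_Ipow d b n = {(d*i + b*k, d*j + (d-b)*k) | i j k. i + j + k = n}"

definition exps_JI :: "nat \<Rightarrow> nat \<Rightarrow> nat \<Rightarrow> (nat \<times> nat) set" where
  "exps_JI d b l = {(d*i + b*k, d*j + (d-b)*k) | i j k. i + j + k = l \<and> k < l}"

lemma mem_exps_Ipow: "i + j + k = n \<Longrightarrow> (d*i + b*k, d*j + (d-b)*k) \<in> exps_Ipow d b n"
  unfolding exps_Ipow_def by blast

lemma mem_exps_JI: "i + j + k = l \<Longrightarrow> k < l \<Longrightarrow> (d*i + b*k, d*j + (d-b)*k) \<in> exps_JI d b l"
  unfolding exps_JI_def by blast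

text \<open>Multiplying a generator of \<open>I^n\<close> by one of \<open>I\<close> raises one of \<open>i, j, k\<close> by one \<dots>\<close>
lemma msum_exps_I_subset: "msum (exps_I d b) (exps_Ipow d b n) \<subseteq> exps_Ipow d b (Suc n)"
proof
  fix z assume "z \<in> msum (exps_I d b) (exps_Ipow d b n)"
  then obtain x i j k where x: "x \<in> exps_I d b" and ijk: "i + j + k = n"
    and z: "z = (fst x + (d*i + b*k), snd x + (d*j + (d-b)*k))"
    unfolding msum_def exps_Ipow_def by auto
  from x consider "x = (d,0)" | "x = (0,d)" | "x = (b,d-b)" unfolding exps_I_def by blast
  then show "z \<in> exps_Ipow d b (Suc n)"
  proof cases
    case 1
    then show ?thesis using z mem_exps_Ipow[of "Suc i" j k "Suc n" d b] ijk
      by (simp add: add.assoc)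
  next
    case 2
    then show ?thesis using z mem_exps_Ipow[of i "Suc j" k "Suc n" d b] ijk
      by (simp add: add.assoc)
  next
    case 3
    then show ?thesis using z mem_exps_Ipow[of i j "Suc k" "Suc n" d b] ijk
      by (simp add: add_ac)
  qed
qed

text \<open>\<dots> and every generator of \<open>I^(n+1)\<close> arises this way, since some index is positive.\<close>
lemma exps_Ipow_Suc_subset: "exps_Ipow d b (Suc n) \<subseteq> msum (exps_I d b) (exps_Ipow d b n)"
proof
  fix z assume "z \<in> exps_Ipow d b (Suc n)"
  then obtain i j k where ijk: "i + j + k = Suc n" and z: "z = (d*i + b*k, d*j + (d-b)*k)"
    unfolding exps_Ipow_def by blast
  have gens: "(d,0) \<in> exps_I d b" "(0,d) \<in> exps_I d b" "(b,d-b) \<in> exps_I d b"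
    by (simp_all add: exps_I_def)
  consider i' where "i = Suc i'" | j' where "i = 0" "j = Suc j'" | k' where "i = 0" "j = 0" "k = Suc k'"
    using ijk by (cases i; cases j; cases k) auto
  then show "z \<in> msum (exps_I d b) (exps_Ipow d b n)"
  proof cases
    case (1 i')
    then show ?thesis using mem_msum[OF gens(1) mem_exps_Ipow[of i' j k n d b]] ijk z
      by (simp add: add.assoc)
  next
    case (2 j')
    then show ?thesis using mem_msum[OF gens(2) mem_exps_Ipow[of i j' k n d b]] ijk z
      by (simp add: add.assoc)
  next
    case (3 k')
    then show ?thesis using mem_msum[OF gens(3) mem_exps_Ipow[of i j k' n d b]] ijk z
      by (simp add: add_ac)
  qed
qed

text \<open>Likewise the generators of \<open>J I^(l-1)\<close> are those of \<open>I^l\<close> with \<open>i > 0\<close> or \<open>j > 0\<close>.\<close>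
lemma msum_exps_J:
  assumes "1 \<le> l" shows "msum (exps_J d) (exps_Ipow d b (l - 1)) = exps_JI d b l"
proof (intro equalityI subsetI)
  fix z assume "z \<in> msum (exps_J d) (exps_Ipow d b (l - 1))"
  then obtain x i j k where x: "x \<in> exps_J d" and ijk: "i + j + k = l - 1"
    and z: "z = (fst x + (d*i + b*k), snd x + (d*j + (d-b)*k))"
    unfolding msum_def exps_Ipow_def by auto
  from x consider "x = (d,0)" | "x = (0,d)" unfolding exps_J_def by blast
  then show "z \<in> exps_JI d b l"
  proof cases
    case 1
    then show ?thesis using z mem_exps_JI[of "Suc i" j k l d b] ijk assms
      by (simp add: add.assoc)
  next
    case 2
    then show ?thesis using z mem_exps_JI[of i "Suc j" k l d b] ijk assms
      by (simp add: add.assoc)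
  qed
next
  fix z assume "z \<in> exps_JI d b l"
  then obtain i j k where ijk: "i + j + k = l" "k < l" and z: "z = (d*i + b*k, d*j + (d-b)*k)"
    unfolding exps_JI_def by blast
  have gens: "(d,0) \<in> exps_J d" "(0,d) \<in> exps_J d" by (simp_all add: exps_J_def)
  consider i' where "i = Suc i'" | j' where "i = 0" "j = Suc j'"
    using ijk by (cases i; cases j) auto
  then show "z \<in> msum (exps_J d) (exps_Ipow d b (l - 1))"
  proof cases
    case (1 i')
    then show ?thesis using mem_msum[OF gens(1) mem_exps_Ipow[of i' j k "l - 1" d b]] ijk z
      by (simp add: add.assoc)
  next
    case (2 j')
    then show ?thesis using mem_msum[OF gens(2) mem_exps_Ipow[of i j' k "l - 1" d b]] ijk z
      by (simp add: add.assoc)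
  qed
qed

lemma I_id_monp: "I_id d b = (gen_ideal (monp ` exps_I d b) :: 'a::field poly poly set)"
  unfolding I_id_def exps_I_def by (simp add: monp_def var_x_pow var_y_pow mon_mult)

lemma J_id_monp: "J_id d = (gen_ideal (monp ` exps_J d) :: 'a::field poly poly set)"
  unfolding J_id_def exps_J_def by (simp add: monp_def var_x_pow var_y_pow)

lemma ideal_pow_I_id:
  "ideal_pow (I_id d b) n = (gen_ideal (monp ` exps_Ipow d b n) :: 'a::field poly poly set)"
proof (induction n)
  case 0
  have "exps_Ipow d b 0 = {(0,0)}" unfolding exps_Ipow_def by auto
  then have "gen_ideal (monp ` exps_Ipow d b 0) = (gen_ideal {1} :: 'a poly poly set)"
    by (simp add: monp_def mon_0)
  then show ?case by (simp add: gen_ideal_unit set_eq_iff)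
next
  case (Suc n)
  have "msum (exps_I d b) (exps_Ipow d b n) = exps_Ipow d b (Suc n)"
    using msum_exps_I_subset exps_Ipow_Suc_subset by blast
  then show ?case using Suc by (simp only: ideal_pow.simps I_id_monp ideal_prod_monp)
qed

lemma colonI_iff:
  assumes "1 \<le> l"
  shows "(f :: 'a::field poly poly) \<in> colonI d b l \<longleftrightarrow>
    (\<forall>a c. cf f a c \<noteq> 0 \<longrightarrow> colon_cond (exps_JI d b l) (exps_Ipow d b l) a c)"
  unfolding colonI_def ideal_pow_I_id J_id_monp ideal_prod_monp msum_exps_J[OF assms]
  by (rule ideal_colon_monp)

lemma var_x_pow_in_colonI:
  "1 \<le> l \<Longrightarrow> (var_x ^ a :: 'a::field poly poly) \<in> colonI d b l
     \<longleftrightarrow> colon_cond (exps_JI d b l) (exps_Ipow d b l) a 0"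
  by (simp add: colonI_iff var_x_pow cf_mon)

lemma var_y_pow_in_colonI:
  "1 \<le> l \<Longrightarrow> (var_y ^ c :: 'a::field poly poly) \<in> colonI d b l
     \<longleftrightarrow> colon_cond (exps_JI d b l) (exps_Ipow d b l) 0 c"
  by (simp add: colonI_iff var_y_pow cf_mon)

lemma exps_JI_antidiagonal:
  assumes "b \<le> d" "\<alpha> \<in> exps_JI d b l" shows "fst \<alpha> + snd \<alpha> = d * l"
proof -
  obtain i j k where ijk: "i + j + k = l" and \<alpha>: "\<alpha> = (d*i + b*k, d*j + (d-b)*k)"
    using assms(2) unfolding exps_JI_def by blast
  have "fst \<alpha> + snd \<alpha> = d*i + d*j + (b*k + (d-b)*k)" using \<alpha> by simp
  also have "\<dots> = d*i + d*j + d*k" using assms(1) by (simp flip: add_mult_distrib)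
  also have "\<dots> = d*l" using ijk by (simp flip: add_mult_distrib2)
  finally show ?thesis .
qed

lemma corner_in_exps_Ipow: "(b*l, (d-b)*l) \<in> exps_Ipow d b l"
  using mem_exps_Ipow[of 0 0 l l d b] by simp

lemma exps_Ipow_subset: "exps_Ipow d b l \<subseteq> exps_JI d b l \<union> {(b*l, (d-b)*l)}"
  unfolding exps_Ipow_def exps_JI_def by fastforce

text \<open>From \<open>l = d\<close> on, the corner is \<open>(x^d)^b (y^d)^(d-b) (x^b y^(d-b))^(l-d)\<close>, itself a
  generator of \<open>J I^(l-1)\<close>.\<close>
lemma corner_in_exps_JI:
  assumes "b \<le> d" "1 \<le> d" "d \<le> l" shows "(b*l, (d-b)*l) \<in> exps_JI d b l"
proof -
  obtain m where l: "l = d + m" using assms(3) le_Suc_ex by blast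
  have "b*l = d*b + b*m" "(d-b)*l = d*(d-b) + (d-b)*m" using l by (simp_all add: algebra_simps)
  then show ?thesis using mem_exps_JI[of b "d - b" m l d b] assms l by simp
qed

lemma colon_cond_large:
  assumes "b \<le> d" "1 \<le> d" "d \<le> l" shows "colon_cond (exps_JI d b l) (exps_Ipow d b l) a c"
  unfolding colon_cond_def
  using exps_Ipow_subset corner_in_exps_JI[OF assms] by force

text \<open>In general only the corner matters: the other generators of \<open>I^l\<close> are in \<open>J I^(l-1)\<close>.\<close>
lemma colon_cond_iff_corner:
  "colon_cond (exps_JI d b l) (exps_Ipow d b l) a c \<longleftrightarrow>
     (\<exists>\<alpha>\<in>exps_JI d b l. fst \<alpha> \<le> a + b*l \<and> snd \<alpha> \<le> c + (d-b)*l)"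
proof
  assume "colon_cond (exps_JI d b l) (exps_Ipow d b l) a c"
  then have "\<exists>\<alpha>\<in>exps_JI d b l. fst \<alpha> \<le> a + fst (b*l, (d-b)*l) \<and> snd \<alpha> \<le> c + snd (b*l, (d-b)*l)"
    using corner_in_exps_Ipow[of b l d] unfolding colon_cond_def by (rule bspec)
  then show "\<exists>\<alpha>\<in>exps_JI d b l. fst \<alpha> \<le> a + b*l \<and> snd \<alpha> \<le> c + (d-b)*l" by simp
next
  assume "\<exists>\<alpha>\<in>exps_JI d b l. fst \<alpha> \<le> a + b*l \<and> snd \<alpha> \<le> c + (d-b)*l"
  then show "colon_cond (exps_JI d b l) (exps_Ipow d b l) a c"
    using exps_Ipow_subset[of d b l] unfolding colon_cond_def by force
qed

definition reach_right :: "nat \<Rightarrow> nat \<Rightarrow> nat \<Rightarrow> nat \<Rightarrow> bool" where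
  "reach_right d b l a \<longleftrightarrow> (\<exists>\<alpha>\<in>exps_JI d b l. b*l \<le> fst \<alpha> \<and> fst \<alpha> \<le> a + b*l)"

definition reach_left :: "nat \<Rightarrow> nat \<Rightarrow> nat \<Rightarrow> nat \<Rightarrow> bool" where
  "reach_left d b l c \<longleftrightarrow> (\<exists>\<alpha>\<in>exps_JI d b l. fst \<alpha> \<le> b*l \<and> b*l \<le> c + fst \<alpha>)"

text \<open>On the antidiagonal, dominating the corner in the \<open>y\<close>-direction up to \<open>c\<close> means lying at
  most \<open>c\<close> to its left; so \<open>x^a y^c\<close> is in the colon iff a generator is near the corner.\<close>
lemma colon_cond_iff_reach:
  assumes "b \<le> d"
  shows "colon_cond (exps_JI d b l) (exps_Ipow d b l) a c \<longleftrightarrow>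
           reach_right d b l a \<or> reach_left d b l c"
proof -
  have corner: "b*l + (d-b)*l = d*l" using assms by (simp flip: add_mult_distrib)
  have "(fst \<alpha> \<le> a + b*l \<and> snd \<alpha> \<le> c + (d-b)*l) \<longleftrightarrow>
          (b*l \<le> fst \<alpha> \<and> fst \<alpha> \<le> a + b*l) \<or> (fst \<alpha> \<le> b*l \<and> b*l \<le> c + fst \<alpha>)"
    if "\<alpha> \<in> exps_JI d b l" for \<alpha>
    using exps_JI_antidiagonal[OF assms that] corner by linarith
  then show ?thesis
    unfolding colon_cond_iff_corner reach_right_def reach_left_def by blast
qed

text \<open>The \<open>x\<close>-exponents of the generators of \<open>J I^(l-1)\<close>: writing \<open>m = l - k\<close>, they are the
  numbers \<open>b l - b m + d i\<close> with \<open>0 < m \<le> l\<close> and \<open>i \<le> m\<close>.\<close>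
lemma fst_exps_JI_iff:
  "x \<in> fst ` exps_JI d b l \<longleftrightarrow> (\<exists>i m. 0 < m \<and> m \<le> l \<and> i \<le> m \<and> x + b*m = b*l + d*i)"
proof
  assume "x \<in> fst ` exps_JI d b l"
  then obtain i j k where "i + j + k = l" "k < l" "x = d*i + b*k"
    unfolding exps_JI_def by force
  moreover have "b*k + b*(l - k) = b*l" using \<open>k < l\<close> by (simp flip: add_mult_distrib2)
  ultimately show "\<exists>i m. 0 < m \<and> m \<le> l \<and> i \<le> m \<and> x + b*m = b*l + d*i"
    by (intro exI[of _ i] exI[of _ "l - k"]) auto
next
  assume "\<exists>i m. 0 < m \<and> m \<le> l \<and> i \<le> m \<and> x + b*m = b*l + d*i"
  then obtain i m where m: "0 < m" "m \<le> l" "i \<le> m" and x: "x + b*m = b*l + d*i" by blast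
  have "b*(l - m) + b*m = b*l" using m by (simp flip: add_mult_distrib2)
  then have "x = d*i + b*(l - m)" using x by linarith
  then show "x \<in> fst ` exps_JI d b l"
    using mem_exps_JI[of i "m - i" "l - m" l d b] m by force
qed

lemma corner_notin_exps_JI:
  assumes "coprime d b" "l < d" shows "b*l \<notin> fst ` exps_JI d b l"
proof
  assume "b*l \<in> fst ` exps_JI d b l"
  then obtain i m where m: "0 < m" "m \<le> l" and "b*l + b*m = b*l + d*i"
    unfolding fst_exps_JI_iff by blast
  then have "d dvd b*m" by (metis add_left_imp_eq dvd_triv_left)
  then have "d dvd m" using assms(1) by (simp add: coprime_dvd_mult_right_iff)
  then show False using m assms(2) by (auto dest: dvd_imp_le)
qed

lemma upclosed_iff_Least_le:
  fixes P :: "nat \<Rightarrow> bool"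
  assumes "\<And>x y. x \<le> y \<Longrightarrow> P x \<Longrightarrow> P y" "P w"
  shows "P a \<longleftrightarrow> (LEAST x. P x) \<le> a"
proof
  assume "P a" then show "(LEAST x. P x) \<le> a" by (rule Least_le)
next
  assume "(LEAST x. P x) \<le> a"
  moreover have "P (LEAST x. P x)" using assms(2) by (rule LeastI)
  ultimately show "P a" using assms(1) by blast
qed

lemma reach_right_mono: "a \<le> a' \<Longrightarrow> reach_right d b l a \<Longrightarrow> reach_right d b l a'"
  unfolding reach_right_def by force

lemma reach_left_mono: "c \<le> c' \<Longrightarrow> reach_left d b l c \<Longrightarrow> reach_left d b l c'"
  unfolding reach_left_def by force

text \<open>The generators \<open>x^(dl)\<close> and \<open>y^(dl)\<close> of \<open>J I^(l-1)\<close> bound the gaps on either side.\<close>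
lemma reach_right_witness: "b \<le> d \<Longrightarrow> 1 \<le> l \<Longrightarrow> reach_right d b l (d*l)"
  unfolding reach_right_def using mem_exps_JI[of l 0 0 l d b] by force

lemma reach_left_witness: "1 \<le> l \<Longrightarrow> reach_left d b l (b*l)"
  unfolding reach_left_def using mem_exps_JI[of 0 l 0 l d b] by force

lemma not_reach_zero:
  assumes "coprime d b" "l < d"
  shows "\<not> reach_right d b l 0" "\<not> reach_left d b l 0"
  using corner_notin_exps_JI[OF assms] unfolding reach_right_def reach_left_def by force+

lemma s_exp_small:
  assumes "b \<le> d" "coprime d b" "1 \<le> l" "l < d"
  shows "reach_right d b l a \<longleftrightarrow> s_exp K d b l \<le> a"
proof -
  have "s_exp K d b l = (LEAST a. reach_right d b l a)"
    unfolding s_exp_def var_x_pow_in_colonI[OF assms(3)] colon_cond_iff_reach[OF assms(1)]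
    using not_reach_zero(2)[OF assms(2,4)] by simp
  then show ?thesis
    by (simp only:) (rule upclosed_iff_Least_le[where P="reach_right d b l", OF reach_right_mono reach_right_witness[OF assms(1,3)]])
qed

lemma t_exp_small:
  assumes "b \<le> d" "coprime d b" "1 \<le> l" "l < d"
  shows "reach_left d b l c \<longleftrightarrow> t_exp K d b l \<le> c"
proof -
  have "t_exp K d b l = (LEAST c. reach_left d b l c)"
    unfolding t_exp_def var_y_pow_in_colonI[OF assms(3)] colon_cond_iff_reach[OF assms(1)]
    using not_reach_zero(1)[OF assms(2,4)] by simp
  then show ?thesis
    by (simp only:) (rule upclosed_iff_Least_le[where P="reach_left d b l", OF reach_left_mono reach_left_witness[OF assms(3)]])
qed

lemma colonI_large:
  assumes "b \<le> d" "0 < d" "d \<le> l"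
  shows "colonI d b l = (UNIV :: 'a::field poly poly set)"
    and "s_exp (K :: 'a itself) d b l = 0" "t_exp (K :: 'a itself) d b l = 0"
proof -
  have all: "colon_cond (exps_JI d b l) (exps_Ipow d b l) a c" for a c
    using colon_cond_large[OF assms(1) _ assms(3)] assms(2) by simp
  have l: "1 \<le> l" using assms(2,3) by simp
  show "colonI d b l = (UNIV :: 'a::field poly poly set)"
    by (rule set_eqI) (simp add: all colonI_iff[OF l])
  show "s_exp (K :: 'a itself) d b l = 0" "t_exp (K :: 'a itself) d b l = 0"
    by (simp_all add: all s_exp_def t_exp_def var_x_pow_in_colonI[OF l] var_y_pow_in_colonI[OF l])
qed

lemma colonI_two_generated:
  assumes "b \<le> d" "coprime d b" "0 < d" "1 \<le> l"
  shows "(colonI d b l :: 'a::field poly poly set)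
           = gen_ideal {var_x ^ s_exp (K :: 'a itself) d b l, var_y ^ t_exp K d b l}"
proof (cases "d \<le> l")
  case True
  have "gen_ideal {1} = (UNIV :: 'a poly poly set)" using gen_ideal_unit by blast
  then show ?thesis using colonI_large(1)[OF assms(1,3) True] colonI_large(2,3)[OF assms(1,3) True, where K=K] by simp
next
  case False
  then have "l < d" by simp
  have "f \<in> colonI d b l \<longleftrightarrow>
          (\<forall>a c. cf f a c \<noteq> 0 \<longrightarrow> reach_right d b l a \<or> reach_left d b l c)" for f :: "'a poly poly"
    by (simp only: colonI_iff[OF assms(4)] colon_cond_iff_reach[OF assms(1)])
  also have "\<dots> f \<longleftrightarrow> (\<forall>a c. cf f a c \<noteq> 0 \<longrightarrow> s_exp K d b l \<le> a \<or> t_exp K d b l \<le> c)" for f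
    by (simp only: s_exp_small[OF assms(1,2,4) \<open>l < d\<close>, where K=K]
        t_exp_small[OF assms(1,2,4) \<open>l < d\<close>, where K=K])
  finally show ?thesis by (auto simp: gen_ideal_two_monomials)
qed

lemma s_exp_eq_one_iff:
  assumes "b \<le> d" "coprime d b" "0 < d" "1 \<le> l"
  shows "s_exp K d b l = 1 \<longleftrightarrow> l < d \<and> b*l + 1 \<in> fst ` exps_JI d b l"
proof (cases "d \<le> l")
  case False
  then have ne: "fst \<alpha> \<noteq> b*l" if "\<alpha> \<in> exps_JI d b l" for \<alpha>
    using corner_notin_exps_JI[OF assms(2), of l] False that by force
  have "reach_right d b l 1 \<longleftrightarrow> b*l + 1 \<in> fst ` exps_JI d b l"
  proof
    assume "reach_right d b l 1"
    then obtain \<alpha> where \<alpha>: "\<alpha> \<in> exps_JI d b l" "b*l \<le> fst \<alpha>" "fst \<alpha> \<le> 1 + b*l"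
      unfolding reach_right_def by blast
    then have "fst \<alpha> = b*l + 1" using ne[OF \<alpha>(1)] by linarith
    then show "b*l + 1 \<in> fst ` exps_JI d b l" using \<alpha>(1) by (metis image_eqI)
  next
    assume "b*l + 1 \<in> fst ` exps_JI d b l"
    then obtain \<alpha> where "\<alpha> \<in> exps_JI d b l" "fst \<alpha> = b*l + 1" by force
    then show "reach_right d b l 1" unfolding reach_right_def by (intro bexI[of _ \<alpha>]) auto
  qed
  moreover have "s_exp K d b l = 1 \<longleftrightarrow> reach_right d b l 1"
    using False s_exp_small[OF assms(1,2,4), of 1 K] s_exp_small[OF assms(1,2,4), of 0 K]
      not_reach_zero(1)[OF assms(2), of l] by auto
  ultimately show ?thesis using False by simp
qed (use colonI_large(2)[OF assms(1,3), of l K] in auto)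

lemma t_exp_eq_one_iff:
  assumes "b \<le> d" "coprime d b" "0 < d" "1 \<le> l"
  shows "t_exp K d b l = 1 \<longleftrightarrow> l < d \<and> (\<exists>x \<in> fst ` exps_JI d b l. x + 1 = b*l)"
proof (cases "d \<le> l")
  case False
  then have ne: "fst \<alpha> \<noteq> b*l" if "\<alpha> \<in> exps_JI d b l" for \<alpha>
    using corner_notin_exps_JI[OF assms(2), of l] False that by force
  have "reach_left d b l 1 \<longleftrightarrow> (\<exists>x \<in> fst ` exps_JI d b l. x + 1 = b*l)"
  proof
    assume "reach_left d b l 1"
    then obtain \<alpha> where \<alpha>: "\<alpha> \<in> exps_JI d b l" "fst \<alpha> \<le> b*l" "b*l \<le> 1 + fst \<alpha>"
      unfolding reach_left_def by blast
    then have "fst \<alpha> + 1 = b*l" using ne[OF \<alpha>(1)] by linarith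
    then show "\<exists>x \<in> fst ` exps_JI d b l. x + 1 = b*l" using \<alpha>(1) by blast
  next
    assume "\<exists>x \<in> fst ` exps_JI d b l. x + 1 = b*l"
    then obtain \<alpha> where "\<alpha> \<in> exps_JI d b l" "fst \<alpha> + 1 = b*l" by blast
    then show "reach_left d b l 1" unfolding reach_left_def by (intro bexI[of _ \<alpha>]) auto
  qed
  moreover have "t_exp K d b l = 1 \<longleftrightarrow> reach_left d b l 1"
    using False t_exp_small[OF assms(1,2,4), of 1 K] t_exp_small[OF assms(1,2,4), of 0 K]
      not_reach_zero(2)[OF assms(2), of l] by auto
  ultimately show ?thesis using False by simp
qed (use colonI_large(3)[OF assms(1,3), of l K] in auto)

lemma mult_residue_inj:
  fixes b d m w :: nat
  assumes "coprime b d" "m < d" "w < d" "[b*m = b*w] (mod d)"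
  shows "m = w"
  using assms cong_mult_lcancel_nat cong_less_modulus_unique_nat by blast

lemma bounded_solution_iff:
  fixes b d l w p q iw :: nat
  assumes "coprime b d" "b < d" "l < d" "0 < w" "w < d" "p \<le> 1" "b*w + p = d*iw + q"
  shows "(\<exists>i m. 0 < m \<and> m \<le> l \<and> i \<le> m \<and> b*m + p = d*i + q) \<longleftrightarrow> w \<le> l"
proof
  assume "\<exists>i m. 0 < m \<and> m \<le> l \<and> i \<le> m \<and> b*m + p = d*i + q"
  then obtain i m where m: "0 < m" "m \<le> l" and eq: "b*m + p = d*i + q" by blast
  have "[b*m + p = q] (mod d)" "[q = b*w + p] (mod d)"
    using eq assms(7) by (simp_all add: cong_def)
  then have "[b*m + p = b*w + p] (mod d)" by (rule cong_trans)
  then have "[b*m = b*w] (mod d)" by (simp only: cong_add_rcancel_nat)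
  then have "m = w" using mult_residue_inj assms(1,3) m(2) assms(5) by simp
  then show "w \<le> l" using m by simp
next
  assume "w \<le> l"
  have "d*iw \<le> b*w + 1" using assms(6,7) by linarith
  also have "\<dots> \<le> (b + 1)*w" using assms(4) by simp
  also have "\<dots> \<le> d*w" using assms(2) by (intro mult_right_mono) auto
  finally have "iw \<le> w" using assms(2) by simp
  then show "\<exists>i m. 0 < m \<and> m \<le> l \<and> i \<le> m \<and> b*m + p = d*i + q"
    using \<open>w \<le> l\<close> assms(4,7) by blast
qed

lemma inverse_mod_exists:
  fixes b d :: nat
  assumes "coprime b d" "2 \<le> d"
  obtains u where "0 < u" "u < d" "(b*u) mod d = 1"
proof -
  obtain x where "[b*x = 1] (mod d)" using cong_solve_coprime_nat[OF assms(1)] by auto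
  then have "(b*(x mod d)) mod d = 1" using assms(2) by (simp add: cong_def mod_mult_right_eq)
  moreover have "x mod d < d" using assms(2) by simp
  moreover have "x mod d \<noteq> 0" using calculation(1) by (metis mult_0_right mod_0 zero_neq_one)
  ultimately show ?thesis using that by blast
qed

text \<open>\<open>s_l = 1\<close> happens exactly for \<open>d - u \<le> l < d\<close>: then \<open>b l + 1\<close> is an \<open>x\<close>-exponent of a
  generator of \<open>J I^(l-1)\<close>, via the solution \<open>m = d - u\<close> of \<open>b m + 1 \<equiv> 0 (mod d)\<close>.\<close>
lemma s_exp_eq_one_iff_inverse:
  assumes "b < d" "coprime d b" "2 \<le> d" "0 < u" "u < d" "(b*u) mod d = 1" "1 \<le> l"
  shows "s_exp K d b l = 1 \<longleftrightarrow> d - u \<le> l \<and> l < d"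
proof -
  define i0 where "i0 = b*u div d"
  have bu: "b*u = d*i0 + 1" using div_mult_mod_eq[of "b*u" d] assms(6) unfolding i0_def
    by (simp add: mult.commute)
  have "b*(d - u) + b*u = d*b" using assms(5) by (simp flip: add_mult_distrib2)
  then have "b*(d - u) + 1 = d*b - d*i0" using bu by linarith
  then have "b*(d - u) + 1 = d*(b - i0)" by (simp add: diff_mult_distrib2)
  then have sol: "(\<exists>i m. 0 < m \<and> m \<le> l \<and> i \<le> m \<and> b*m + 1 = d*i + 0) \<longleftrightarrow> d - u \<le> l"
    if "l < d" for l
    using bounded_solution_iff[of b d l "d - u" 1 "b - i0" 0] assms(1,2,4,5) that
    by (simp add: coprime_commute)
  have mem: "b*l + 1 \<in> fst ` exps_JI d b l \<longleftrightarrow>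
          (\<exists>i m. 0 < m \<and> m \<le> l \<and> i \<le> m \<and> b*m + 1 = d*i + 0)"
    unfolding fst_exps_JI_iff by (simp add: add.assoc)
  have "s_exp K d b l = 1 \<longleftrightarrow> l < d \<and> b*l + 1 \<in> fst ` exps_JI d b l"
    using assms(1-3,7) by (intro s_exp_eq_one_iff) auto
  then show ?thesis by (cases "l < d") (simp_all only: mem sol, simp_all)
qed

text \<open>Symmetrically, \<open>t_l = 1\<close> happens exactly for \<open>u \<le> l < d\<close>, via \<open>b u \<equiv> 1 (mod d)\<close>.\<close>
lemma t_exp_eq_one_iff_inverse:
  assumes "b < d" "coprime d b" "2 \<le> d" "0 < u" "u < d" "(b*u) mod d = 1" "1 \<le> l"
  shows "t_exp K d b l = 1 \<longleftrightarrow> u \<le> l \<and> l < d"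
proof -
  have "b*u + 0 = d*(b*u div d) + 1" using div_mult_mod_eq[of "b*u" d] assms(6)
    by (simp add: mult.commute)
  then have sol: "(\<exists>i m. 0 < m \<and> m \<le> l \<and> i \<le> m \<and> b*m + 0 = d*i + 1) \<longleftrightarrow> u \<le> l"
    if "l < d" for l
    using bounded_solution_iff[of b d l u 0 "b*u div d" 1] assms(1,2,4,5) that
    by (simp add: coprime_commute)
  have "(\<exists>x \<in> fst ` exps_JI d b l. x + 1 = b*l) \<longleftrightarrow>
          (\<exists>i m. 0 < m \<and> m \<le> l \<and> i \<le> m \<and> b*m + 0 = d*i + 1)"
  proof
    assume "\<exists>x \<in> fst ` exps_JI d b l. x + 1 = b*l"
    then obtain x where x: "x \<in> fst ` exps_JI d b l" "x + 1 = b*l" by blast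
    then obtain i m where m: "0 < m" "m \<le> l" "i \<le> m" "x + b*m = b*l + d*i"
      unfolding fst_exps_JI_iff by blast
    then have "b*m + 0 = d*i + 1" using x(2) by linarith
    then show "\<exists>i m. 0 < m \<and> m \<le> l \<and> i \<le> m \<and> b*m + 0 = d*i + 1" using m(1-3) by blast
  next
    assume "\<exists>i m. 0 < m \<and> m \<le> l \<and> i \<le> m \<and> b*m + 0 = d*i + 1"
    then obtain i m where m: "0 < m" "m \<le> l" "i \<le> m" "b*m = d*i + 1" by auto
    have "b*m \<le> b*l" using m(2) by (rule mult_le_mono2)
    then have "(b*l - 1) + b*m = b*l + d*i" "(b*l - 1) + 1 = b*l" using m(4) by linarith+
    then have "b*l - 1 \<in> fst ` exps_JI d b l" "(b*l - 1) + 1 = b*l"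
      unfolding fst_exps_JI_iff using m(1-3) by blast+
    then show "\<exists>x \<in> fst ` exps_JI d b l. x + 1 = b*l" by blast
  qed
  moreover have "t_exp K d b l = 1 \<longleftrightarrow> l < d \<and> (\<exists>x \<in> fst ` exps_JI d b l. x + 1 = b*l)"
    using assms(1-3,7) by (intro t_exp_eq_one_iff) auto
  ultimately show ?thesis by (cases "l < d") (simp_all only: sol, simp_all)
qed

lemma Least_thresholds:
  fixes P Q :: "nat \<Rightarrow> bool"
  assumes P: "\<And>l. 1 \<le> l \<Longrightarrow> P l \<longleftrightarrow> a \<le> l \<and> l < d"
    and Q: "\<And>l. 1 \<le> l \<Longrightarrow> Q l \<longleftrightarrow> c \<le> l \<and> l < d"
    and "0 < a" "0 < c" "a + c = d"
  shows "(LEAST l. 1 \<le> l \<and> (P l \<or> Q l)) = min a c"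
    and "(LEAST l. 1 \<le> l \<and> P l \<and> Q l) = max a c"
proof -
  have min: "1 \<le> min a c" "min a c < d" and max: "1 \<le> max a c" "max a c < d"
    using assms(3-5) by auto
  show "(LEAST l. 1 \<le> l \<and> (P l \<or> Q l)) = min a c"
  proof (rule Least_equality)
    show "1 \<le> min a c \<and> (P (min a c) \<or> Q (min a c))"
      using min P[OF min(1)] Q[OF min(1)] by linarith
    show "min a c \<le> l" if "1 \<le> l \<and> (P l \<or> Q l)" for l
      using that P[of l] Q[of l] by linarith
  qed
  show "(LEAST l. 1 \<le> l \<and> P l \<and> Q l) = max a c"
  proof (rule Least_equality)
    show "1 \<le> max a c \<and> P (max a c) \<and> Q (max a c)"
      using max P[OF max(1)] Q[OF max(1)] by linarith
    show "max a c \<le> l" if "1 \<le> l \<and> P l \<and> Q l" for l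
      using that P[of l] Q[of l] by linarith
  qed
qed

theorem mainTheorem10:
  fixes K :: "'a::field itself" and d b :: nat
  assumes "d \<ge> 2" and "1 \<le> b" and "b \<le> d - b" and "gcd d b = 1"
  defines "s \<equiv> s_exp K d b" and "t \<equiv> t_exp K d b"
  shows "(\<forall>l\<ge>1. (colonI d b l :: 'a poly poly set)
                  = gen_ideal {var_x ^ s l, var_y ^ t l})
    \<and> (\<exists>l\<ge>1. s l = 1 \<or> t l = 1)
    \<and> (\<exists>l\<ge>1. s l = 1 \<and> t l = 1)
    \<and> (LEAST l. l \<ge> 1 \<and> s l = 1 \<and> t l = 1)
          \<ge> d - (LEAST l. l \<ge> 1 \<and> (s l = 1 \<or> t l = 1))"
proof -
  have cop: "coprime d b" using assms(4) by (simp add: coprime_iff_gcd_eq_1)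
  have bd: "b < d" using assms(1-3) by auto
  obtain u where u: "0 < u" "u < d" "(b*u) mod d = 1"
    using inverse_mod_exists[of b d] cop assms(1) by (auto simp: coprime_commute)
  have s_one: "s l = 1 \<longleftrightarrow> d - u \<le> l \<and> l < d" if "1 \<le> l" for l
    unfolding s_def using s_exp_eq_one_iff_inverse[OF bd cop assms(1) u that] .
  have t_one: "t l = 1 \<longleftrightarrow> u \<le> l \<and> l < d" if "1 \<le> l" for l
    unfolding t_def using t_exp_eq_one_iff_inverse[OF bd cop assms(1) u that] .
  have colon: "(colonI d b l :: 'a poly poly set) = gen_ideal {var_x ^ s l, var_y ^ t l}"
    if "1 \<le> l" for l
    unfolding s_def t_def using colonI_two_generated[of b d l K] bd cop that by simp
  have "0 < d - u" "d - u + u = d" using u(2) by auto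
  note least = Least_thresholds[OF s_one t_one this(1) u(1) this(2)]
  have "min (d - u) u \<ge> 1 \<and> (s (min (d - u) u) = 1 \<or> t (min (d - u) u) = 1)"
    using s_one[of "min (d - u) u"] t_one[of "min (d - u) u"] u by (auto simp: min_def)
  moreover have "max (d - u) u \<ge> 1 \<and> s (max (d - u) u) = 1 \<and> t (max (d - u) u) = 1"
    using s_one[of "max (d - u) u"] t_one[of "max (d - u) u"] u by (auto simp: max_def)
  moreover have "max (d - u) u = d - min (d - u) u" using u(2) by (auto simp: min_def max_def)
  ultimately show ?thesis using colon least by auto
qed

end
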